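(* Let $G$ be a scheduling game belonging to one of the following classes: (i) games on related machines with arbitrary priority lists in which all jobs have the same processing-time function (either all $p(t)=b+at$, or all $p(t)=\max\{\tau,b-at\}$); (ii) games on two related machines with arbitrary priority lists in which all jobs have positive deterioration; (iii) games on identical machines (common speed $s$) with arbitrary priority lists in which either all jobs have positive deterioration or all jobs have negative deterioration with $a_i\le s$; (iv) games on related machines with a global priority list (all machines share the same list) and arbitrary jobs. Then every best-response sequence in $G$ is finite, and thus converges to a pure Nash equilibrium.
   Context: Scheduling game: a finite set $N$ of $n\ge1$ jobs (players) and a set $M$ of machines. Machine $j$ has speed $s_j>0$ and a priority list $\pi_j$, a bijection $N\to\{1,\dots,n\}$; job $u$ has higher priority than $v$ on $j$ iff $\pi_j(u)<\pi_j(v)$. Each job $i$ has a processing-time function $p_i$: with positive deterioration $p_i(t)=b_i+a_it$ ($b_i,a_i\ge0$), with negative deterioration $p_i(t)=\max\{\tau_i,b_i-a_it\}$ ($b_i,a_i\ge0$, $\tau_i>0$). A profile $\sigma\in M^N$ assigns each job to a machine. On machine $j$, the jobs assigned to it, listed in increasing $\pi_j$-order as $i_1,i_2,\dots$, are processed without idle time: $S_{i_1}(\sigma)=0$, $C_{i_k}(\sigma)=S_{i_k}(\sigma)+p_{i_k}(S_{i_k}(\sigma))/s_j$, $S_{i_{k+1}}(\sigma)=C_{i_k}(\sigma)$. The cost of job $i$ is $C_i(\sigma)$. A pure Nash equilibrium (NE) is a profile in which no job can strictly decrease its completion time by unilaterally changing its machine. A best-response sequence is a sequence of profiles in which each profile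 is obtained from the previous one by letting a single job, which can strictly decrease its completion time by deviating, move to a machine that minimizes its completion time given the other jobs' strategies. *)

theory Defs
  imports Complex_Main
begin

text \<open>Jobs are the elements of a finite type 'j (the player set N = UNIV, n = card (UNIV :: 'j set)),
machines are the elements of a finite type 'm (the machine set M = UNIV).\<close>

datatype ptime =
    PosDet real real
  | NegDet real real real

fun ptime_eval :: "ptime \<Rightarrow> real \<Rightarrow> real" where
  "ptime_eval (PosDet b a) t = b + a * t"
| "ptime_eval (NegDet \<tau> b a) t = max \<tau> (b - a * t)"

fun ptime_ok :: "ptime \<Rightarrow> bool" where
  "ptime_ok (PosDet b a) \<longleftrightarrow> b \<ge> 0 \<and> a \<ge> 0"
| "ptime_ok (NegDet \<tau> b a) \<longleftrightarrow> \<tau> > 0 \<and> b \<ge> 0 \<and> a \<ge> 0"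

fun is_pos :: "ptime \<Rightarrow> bool" where
  "is_pos (PosDet b a) = True"
| "is_pos (NegDet \<tau> b a) = False"

fun det_rate :: "ptime \<Rightarrow> real" where
  "det_rate (PosDet b a) = a"
| "det_rate (NegDet \<tau> b a) = a"

definition valid_game ::
  "('m::finite \<Rightarrow> real) \<Rightarrow> ('m \<Rightarrow> 'j::finite \<Rightarrow> nat) \<Rightarrow> ('j \<Rightarrow> ptime) \<Rightarrow> bool" where
  "valid_game s \<pi> p \<longleftrightarrow>
     (\<forall>m. s m > 0) \<and>
     (\<forall>m. bij_betw (\<pi> m) UNIV {1..card (UNIV :: 'j set)}) \<and>
     (\<forall>i. ptime_ok (p i))"

definition prio_list :: "('m \<Rightarrow> 'j::finite \<Rightarrow> nat) \<Rightarrow> 'm \<Rightarrow> 'j list" where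
  "prio_list \<pi> m = map (\<lambda>k. THE i. \<pi> m i = k) [1..<Suc (card (UNIV :: 'j set))]"

fun run :: "real \<Rightarrow> ('j \<Rightarrow> ptime) \<Rightarrow> real \<Rightarrow> 'j list \<Rightarrow> real" where
  "run sp p t [] = t"
| "run sp p t (k # ks) = run sp p (t + ptime_eval (p k) t / sp) ks"

definition compl ::
  "('m \<Rightarrow> real) \<Rightarrow> ('m \<Rightarrow> 'j::finite \<Rightarrow> nat) \<Rightarrow> ('j \<Rightarrow> ptime) \<Rightarrow> ('j \<Rightarrow> 'm) \<Rightarrow> 'j \<Rightarrow> real" where
  "compl s \<pi> p \<sigma> i =
     run (s (\<sigma> i)) p 0
       (filter (\<lambda>k. \<sigma> k = \<sigma> i \<and> \<pi> (\<sigma> i) k \<le> \<pi> (\<sigma> i) i) (prio_list \<pi> (\<sigma> i)))"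

definition is_NE ::
  "('m \<Rightarrow> real) \<Rightarrow> ('m \<Rightarrow> 'j::finite \<Rightarrow> nat) \<Rightarrow> ('j \<Rightarrow> ptime) \<Rightarrow> ('j \<Rightarrow> 'm) \<Rightarrow> bool" where
  "is_NE s \<pi> p \<sigma> \<longleftrightarrow> (\<forall>i m. compl s \<pi> p \<sigma> i \<le> compl s \<pi> p (\<sigma>(i := m)) i)"

definition br_step ::
  "('m \<Rightarrow> real) \<Rightarrow> ('m \<Rightarrow> 'j::finite \<Rightarrow> nat) \<Rightarrow> ('j \<Rightarrow> ptime) \<Rightarrow> ('j \<Rightarrow> 'm) \<Rightarrow> ('j \<Rightarrow> 'm) \<Rightarrow> bool" where
  "br_step s \<pi> p \<sigma> \<sigma>' \<longleftrightarrow>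
     (\<exists>i m. \<sigma>' = \<sigma>(i := m) \<and>
        (\<exists>m'. compl s \<pi> p (\<sigma>(i := m')) i < compl s \<pi> p \<sigma> i) \<and>
        (\<forall>m'. compl s \<pi> p (\<sigma>(i := m)) i \<le> compl s \<pi> p (\<sigma>(i := m')) i))"

definition game_class ::
  "('m::finite \<Rightarrow> real) \<Rightarrow> ('m \<Rightarrow> 'j::finite \<Rightarrow> nat) \<Rightarrow> ('j \<Rightarrow> ptime) \<Rightarrow> bool" where
  "game_class s \<pi> p \<longleftrightarrow>
     (\<forall>i j. p i = p j) \<or>
     (card (UNIV :: 'm set) = 2 \<and> (\<forall>i. is_pos (p i))) \<or>
     ((\<forall>m m'. s m = s m') \<and>
        ((\<forall>i. is_pos (p i)) \<or> (\<forall>i. \<not> is_pos (p i) \<and> (\<forall>m. det_rate (p i) \<le> s m)))) \<or>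
     (\<forall>m m'. \<pi> m = \<pi> m')"

end

(* A move of job i changes only the schedules of the jobs that come after i, on the machine
   i leaves or on the machine it joins. In classes (i), (iii) and (iv) every job carries a key,
   ordered lexicographically: (C_j, prio_j), (S_j, prio_j) and (prio_j, C_j) respectively.
   After an improving move, the new key of the mover lies below its old key and below the old
   key of every job whose key changed. So the multiset of keys moves strictly in a fixed strict
   order on multisets (Dershowitz-Manna), no profile can recur, and as there are only finitely
   many profiles the sequence stops.

   For two machines with positive deterioration this potential fails. Instead take the job k
   with the highest priority on the slower machine among the jobs that still move. Once k moves
   to the slow machine it never wants to leave it again. A job that joins the fast machine only
   delays k there. A job h that leaves the fast machine ahead of k cannot open a profitable slot
   for k: h would then finish behind k on the slow machine, which is no earlier than h finished
   on the fast one. Hence k moves at most twice, and induction on the set of moving jobs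
   finishes the proof. *)

theory Submission
  imports Defs "HOL-Library.Multiset" "HOL-Library.Product_Lexorder"
begin

section \<open>Potentials on finite state spaces\<close>

definition key_mset :: "('j::finite \<Rightarrow> 'a) \<Rightarrow> 'a multiset" where
  "key_mset e = image_mset e (mset_set UNIV)"

definition key_descent :: "('j \<Rightarrow> 'a::order) \<Rightarrow> ('j \<Rightarrow> 'a) \<Rightarrow> bool" where
  "key_descent e e' \<longleftrightarrow> (\<exists>i. e' i < e i \<and> (\<forall>j. e' j \<noteq> e j \<longrightarrow> e' i < e j))"

lemma key_descent_mult:
  fixes e e' :: "'j::finite \<Rightarrow> 'a::order"
  assumes "key_descent e e'"
  shows "(key_mset e, key_mset e') \<in> mult {(x, y). y < x}"
proof -
  obtain i where i: "e' i < e i" and below: "\<And>j. e' j \<noteq> e j \<Longrightarrow> e' i < e j"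
    using assms unfolding key_descent_def by blast
  define U where "U = {j. e' j = e j}"
  have split: "mset_set (UNIV :: 'j set) = mset_set U + mset_set (- U)"
    using mset_set_Union[of U "- U"] by simp
  have same: "image_mset e' (mset_set U) = image_mset e (mset_set U)"
    by (rule image_mset_cong) (simp add: U_def)
  have "i \<in> - U"
    using i by (simp add: U_def)
  then have "(image_mset e (mset_set U) + image_mset e (mset_set (- U)),
              image_mset e (mset_set U) + image_mset e' (mset_set (- U))) \<in> mult {(x, y). y < x}"
    by (intro one_step_implies_mult) (auto simp: mset_set_empty_iff U_def intro!: bexI[of _ i] below)
  then show ?thesis
    unfolding key_mset_def split by (simp add: same)
qed

lemma no_infinite_chain_finite_strict_order:
  fixes \<Phi> :: "'s::finite \<Rightarrow> 'a"
  assumes "trans r" and "irrefl r"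
  shows "\<nexists>f. \<forall>k. (\<Phi> (f k), \<Phi> (f (Suc k))) \<in> r"
proof -
  let ?R = "{(y, x). (\<Phi> x, \<Phi> y) \<in> r}"
  have "trans ?R"
    using \<open>trans r\<close> unfolding trans_def by blast
  moreover have "irrefl ?R"
    using \<open>irrefl r\<close> unfolding irrefl_def by blast
  ultimately have "acyclic ?R"
    by (simp add: acyclic_irrefl)
  then have "wf ?R"
    by (intro finite_acyclic_wf) simp
  then show ?thesis
    unfolding wf_iff_no_infinite_down_chain by simp
qed

lemma no_infinite_chain_key_descent:
  fixes E :: "'s::finite \<Rightarrow> 'j::finite \<Rightarrow> 'a::order"
  assumes "\<And>x y. R x y \<Longrightarrow> key_descent (E x) (E y)"
  shows "\<nexists>f. \<forall>k. R (f k) (f (Suc k))"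
proof -
  have "trans {(x :: 'a, y). y < x}" "irrefl {(x :: 'a, y). y < x}"
    unfolding trans_def irrefl_def by auto
  then have "\<nexists>f. \<forall>k. (key_mset (E (f k)), key_mset (E (f (Suc k)))) \<in> mult {(x, y). y < x}"
    by (intro no_infinite_chain_finite_strict_order trans_mult irrefl_mult)
  then show ?thesis
    using assms key_descent_mult by blast
qed

section \<open>Processing a list of jobs\<close>

lemma filter_sorted_split:
  assumes "sorted_wrt (\<lambda>x y. f x < (f y :: nat)) xs"
  shows "filter P xs = filter (\<lambda>x. P x \<and> f x < v) xs @ filter (\<lambda>x. P x \<and> v \<le> f x) xs"
  using assms
proof (induction xs)
  case (Cons x xs)
  show ?case
  proof (cases "f x < v")
    case False
    with Cons.prems have "\<forall>y \<in> set xs. v \<le> f y"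
      by auto
    then have "filter (\<lambda>x. P x \<and> f x < v) xs = []"
      and "filter (\<lambda>x. P x \<and> v \<le> f x) xs = filter P xs"
      by (auto simp: filter_empty_conv intro!: filter_cong)
    then show ?thesis
      using False by simp
  qed (use Cons in auto)
qed simp

lemma filter_eq_singleton:
  assumes "distinct xs" and "x \<in> set xs"
  shows "filter (HOL.eq x) xs = [x]"
  using assms by (induction xs) (auto simp: filter_empty_conv)

lemma run_append: "run sp p t (xs @ ys) = run sp p (run sp p t xs) ys"
  by (induction xs arbitrary: t) auto

lemma ptime_eval_nonneg: "ptime_ok q \<Longrightarrow> 0 \<le> t \<Longrightarrow> 0 \<le> ptime_eval q t"
  by (cases q) auto

lemma mono_ptime_step:
  assumes "ptime_ok q" and "0 < sp" and "is_pos q \<or> det_rate q \<le> sp"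
  shows "mono (\<lambda>t. t + ptime_eval q t / sp)"
proof (cases q)
  case (PosDet b a)
  have "(b + a * t) / sp \<le> (b + a * t') / sp" if "t \<le> t'" for t t'
    using PosDet assms that by (intro divide_right_mono) (auto intro: mult_left_mono)
  with PosDet show ?thesis
    by (auto intro!: monoI add_mono)
next
  case (NegDet \<tau> b a)
  have "max \<tau> (b - a * t) / sp \<le> (t' - t) + max \<tau> (b - a * t') / sp" if "t \<le> t'" for t t'
  proof -
    have "a * (t' - t) \<le> sp * (t' - t)"
      using NegDet assms that by (intro mult_right_mono) auto
    moreover have "0 \<le> sp * (t' - t)"
      using assms that by simp
    ultimately have "max \<tau> (b - a * t) \<le> sp * (t' - t) + max \<tau> (b - a * t')"
      by (smt (verit) right_diff_distrib)
    then show ?thesis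
      using \<open>0 < sp\<close> by (simp add: field_simps)
  qed
  with NegDet show ?thesis
    by (fastforce intro!: monoI)
qed

lemma run_ge:
  assumes "\<And>k. ptime_ok (p k)" and "0 < sp" and "0 \<le> t"
  shows "t \<le> run sp p t xs"
  using assms(3)
proof (induction xs arbitrary: t)
  case (Cons k xs)
  have "0 \<le> ptime_eval (p k) t / sp"
    using assms(1,2) Cons.prems by (simp add: ptime_eval_nonneg)
  with Cons show ?case
    by (metis order.trans le_add_same_cancel1 run.simps(2))
qed simp

lemma run_Cons_ge:
  assumes "\<And>k. ptime_ok (p k)" and "0 < sp" and "0 \<le> t"
  shows "t + ptime_eval (p k) t / sp \<le> run sp p t (k # xs)"
  using assms by (simp add: run_ge ptime_eval_nonneg)

lemma mono_run:
  assumes "\<And>k. mono (\<lambda>t. t + ptime_eval (p k) t / sp)"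
  shows "mono (\<lambda>t. run sp p t xs)"
proof (induction xs)
  case (Cons k xs)
  then show ?case
    using assms by (auto intro!: monoI dest: monoD)
qed (simp add: mono_def)

lemma run_filter_mono:
  assumes "\<And>k. ptime_ok (p k)" and "0 < sp"
    and "\<And>k. mono (\<lambda>t. t + ptime_eval (p k) t / sp)"
    and "\<And>k. P k \<Longrightarrow> Q k" and "0 \<le> t"
  shows "run sp p t (filter P xs) \<le> run sp p t (filter Q xs)"
  using assms(5)
proof (induction xs arbitrary: t)
  case (Cons k xs)
  let ?t' = "t + ptime_eval (p k) t / sp"
  have "t \<le> ?t'"
    using assms(1,2) Cons.prems by (simp add: ptime_eval_nonneg)
  moreover have "mono (\<lambda>t. run sp p t (filter Q xs))"
    using assms(3) by (rule mono_run)
  ultimately have "run sp p t (filter Q xs) \<le> run sp p ?t' (filter Q xs)"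
    by (metis monoD)
  then show ?case
    using Cons.IH[OF Cons.prems] Cons.IH[of ?t'] Cons.prems \<open>t \<le> ?t'\<close> assms(4) by auto
qed simp

section \<open>Scheduling games\<close>

locale scheduling_game =
  fixes s :: "'m::finite \<Rightarrow> real" and \<pi> :: "'m \<Rightarrow> 'j::finite \<Rightarrow> nat" and p :: "'j \<Rightarrow> ptime"
  assumes valid: "valid_game s \<pi> p"
begin

abbreviation C :: "('j \<Rightarrow> 'm) \<Rightarrow> 'j \<Rightarrow> real" where
  "C \<equiv> compl s \<pi> p"

lemma speed_pos: "0 < s m"
  using valid unfolding valid_game_def by blast

lemma ptimes_ok: "ptime_ok (p k)"
  using valid unfolding valid_game_def by blast

lemma prio_bij: "bij_betw (\<pi> m) UNIV {1..card (UNIV :: 'j set)}"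
  using valid unfolding valid_game_def by blast

lemma prio_eq_iff [simp]: "\<pi> m i = \<pi> m j \<longleftrightarrow> i = j"
  using prio_bij[of m] unfolding bij_betw_def inj_on_def by blast

lemma map_prio_list: "map (\<pi> m) (prio_list \<pi> m) = [1..<Suc (card (UNIV :: 'j set))]"
proof -
  have "\<pi> m (THE i. \<pi> m i = k) = k" if "k \<in> set [1..<Suc (card (UNIV :: 'j set))]" for k
  proof (rule theI')
    have "k \<in> range (\<pi> m)"
      using that prio_bij[of m] unfolding bij_betw_def by auto
    then show "\<exists>!i. \<pi> m i = k"
      by auto
  qed
  then show ?thesis
    unfolding prio_list_def map_map comp_def by (intro map_idI) blast
qed

lemma sorted_prio_list: "sorted_wrt (\<lambda>i j. \<pi> m i < \<pi> m j) (prio_list \<pi> m)"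
  using sorted_wrt_upt map_prio_list[of m] by (metis sorted_wrt_map)

lemma distinct_prio_list: "distinct (prio_list \<pi> m)"
  using distinct_upt map_prio_list[of m] by (metis distinct_map)

lemma set_prio_list: "j \<in> set (prio_list \<pi> m)"
proof -
  have "\<pi> m j \<in> {1..card (UNIV :: 'j set)}"
    using prio_bij[of m] unfolding bij_betw_def by blast
  then have "\<pi> m j \<in> set (map (\<pi> m) (prio_list \<pi> m))"
    unfolding map_prio_list by auto
  then show ?thesis
    by auto
qed

definition queue :: "('j \<Rightarrow> 'm) \<Rightarrow> 'm \<Rightarrow> nat \<Rightarrow> 'j list" where
  "queue \<sigma> m v = filter (\<lambda>k. \<sigma> k = m \<and> \<pi> m k < v) (prio_list \<pi> m)"

definition finish :: "('j \<Rightarrow> 'm) \<Rightarrow> 'm \<Rightarrow> nat \<Rightarrow> real" where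
  "finish \<sigma> m v = run (s m) p 0 (queue \<sigma> m v)"

definition S :: "('j \<Rightarrow> 'm) \<Rightarrow> 'j \<Rightarrow> real" where
  "S \<sigma> j = finish \<sigma> (\<sigma> j) (\<pi> (\<sigma> j) j)"

lemma queue_append:
  assumes "v \<le> w"
  shows "queue \<sigma> m w = queue \<sigma> m v @ filter (\<lambda>k. \<sigma> k = m \<and> v \<le> \<pi> m k \<and> \<pi> m k < w) (prio_list \<pi> m)"
proof -
  let ?P = "\<lambda>k. \<sigma> k = m \<and> \<pi> m k < w"
  have "queue \<sigma> m w = filter (\<lambda>k. ?P k \<and> \<pi> m k < v) (prio_list \<pi> m)
      @ filter (\<lambda>k. ?P k \<and> v \<le> \<pi> m k) (prio_list \<pi> m)"
    unfolding queue_def by (rule filter_sorted_split[OF sorted_prio_list])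
  also have "filter (\<lambda>k. ?P k \<and> \<pi> m k < v) (prio_list \<pi> m) = queue \<sigma> m v"
    unfolding queue_def using assms by (intro filter_cong) auto
  also have "filter (\<lambda>k. ?P k \<and> v \<le> \<pi> m k) (prio_list \<pi> m)
      = filter (\<lambda>k. \<sigma> k = m \<and> v \<le> \<pi> m k \<and> \<pi> m k < w) (prio_list \<pi> m)"
    by (intro filter_cong) auto
  finally show ?thesis .
qed

lemma queue_Suc:
  assumes "\<sigma> j = m"
  shows "queue \<sigma> m (Suc (\<pi> m j)) = queue \<sigma> m (\<pi> m j) @ [j]"
proof -
  have "filter (\<lambda>k. \<sigma> k = m \<and> \<pi> m j \<le> \<pi> m k \<and> \<pi> m k < Suc (\<pi> m j)) (prio_list \<pi> m)
      = filter (HOL.eq j) (prio_list \<pi> m)"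
  proof (rule filter_cong)
    show "(\<sigma> k = m \<and> \<pi> m j \<le> \<pi> m k \<and> \<pi> m k < Suc (\<pi> m j)) = (j = k)" for k
      using assms le_antisym[of "\<pi> m j" "\<pi> m k"] by (auto simp only: less_Suc_eq_le prio_eq_iff)
  qed simp
  also have "\<dots> = [j]"
    using distinct_prio_list set_prio_list by (rule filter_eq_singleton)
  finally show ?thesis
    using queue_append[of "\<pi> m j" "Suc (\<pi> m j)" \<sigma> m] by simp
qed

lemma finish_cong:
  assumes "\<And>k. \<pi> m k < v \<Longrightarrow> \<sigma>' k = m \<longleftrightarrow> \<sigma> k = m"
  shows "finish \<sigma>' m v = finish \<sigma> m v"
proof -
  have "queue \<sigma>' m v = queue \<sigma> m v"
    unfolding queue_def using assms by (intro filter_cong) auto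
  then show ?thesis
    unfolding finish_def by simp
qed

lemma finish_nonneg: "0 \<le> finish \<sigma> m v"
  unfolding finish_def using run_ge[of p, OF ptimes_ok speed_pos] by simp

lemma finish_mono:
  assumes "v \<le> w"
  shows "finish \<sigma> m v \<le> finish \<sigma> m w"
  unfolding finish_def queue_append[OF assms] run_append
  using run_ge[of p, OF ptimes_ok speed_pos] finish_nonneg[unfolded finish_def] by simp

lemma compl_eq_finish: "C \<sigma> j = finish \<sigma> (\<sigma> j) (Suc (\<pi> (\<sigma> j) j))"
  unfolding compl_def finish_def queue_def by (simp add: less_Suc_eq_le)

lemma compl_eq_start: "C \<sigma> j = S \<sigma> j + ptime_eval (p j) (S \<sigma> j) / s (\<sigma> j)"
  unfolding compl_eq_finish S_def finish_def queue_Suc[OF refl] run_append by simp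

lemma start_nonneg: "0 \<le> S \<sigma> j"
  unfolding S_def by (rule finish_nonneg)

lemma start_le_compl: "S \<sigma> j \<le> C \<sigma> j"
  unfolding compl_eq_finish S_def by (simp add: finish_mono)

lemma move_unaffected:
  assumes "j \<noteq> i" and "(\<sigma> j \<noteq> \<sigma> i \<and> \<sigma> j \<noteq> m) \<or> \<pi> (\<sigma> j) j < \<pi> (\<sigma> j) i"
  shows "S (\<sigma>(i := m)) j = S \<sigma> j" and "C (\<sigma>(i := m)) j = C \<sigma> j"
proof -
  have "finish (\<sigma>(i := m)) (\<sigma> j) v = finish \<sigma> (\<sigma> j) v" if "v \<le> Suc (\<pi> (\<sigma> j) j)" for v
    using assms that by (intro finish_cong) auto
  then show "S (\<sigma>(i := m)) j = S \<sigma> j" and "C (\<sigma>(i := m)) j = C \<sigma> j"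
    unfolding S_def compl_eq_finish using assms(1) by simp_all
qed

lemma move_effect_cases:
  assumes "j \<noteq> i"
  obtains "S (\<sigma>(i := m)) j = S \<sigma> j" and "C (\<sigma>(i := m)) j = C \<sigma> j"
    | "\<sigma> j = m" and "\<pi> m i < \<pi> m j"
    | "\<sigma> j = \<sigma> i" and "\<pi> (\<sigma> i) i < \<pi> (\<sigma> i) j"
proof (cases "(\<sigma> j \<noteq> \<sigma> i \<and> \<sigma> j \<noteq> m) \<or> \<pi> (\<sigma> j) j < \<pi> (\<sigma> j) i")
  case True
  then show ?thesis
    using that(1) move_unaffected[OF assms] by blast
next
  case False
  moreover have "\<pi> (\<sigma> j) j \<noteq> \<pi> (\<sigma> j) i"
    using assms by simp
  ultimately show ?thesis
    using that(2,3) by (metis linorder_neqE_nat)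
qed

lemma later_on_same_machine:
  assumes "\<sigma> j = \<sigma> i" and "\<pi> (\<sigma> i) i < \<pi> (\<sigma> i) j"
  shows "C \<sigma> i \<le> S \<sigma> j"
  unfolding compl_eq_finish S_def using assms by (simp add: finish_mono)

lemma later_on_target_machine:
  assumes "\<sigma> i \<noteq> m" and "\<sigma> j = m" and "\<pi> m i < \<pi> m j"
  shows "S (\<sigma>(i := m)) i \<le> S \<sigma> j"
proof -
  have "S (\<sigma>(i := m)) i = finish \<sigma> m (\<pi> m i)"
    unfolding S_def using assms(1) by (simp, intro finish_cong) auto
  also have "\<dots> \<le> S \<sigma> j"
    unfolding S_def using assms by (simp add: finish_mono)
  finally show ?thesis .
qed

lemma later_on_target_machine_identical_ptimes:
  assumes "\<And>k. p k = p i" and "\<sigma> i \<noteq> m" and "\<sigma> j = m" and "\<pi> m i < \<pi> m j"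
  shows "C (\<sigma>(i := m)) i \<le> C \<sigma> j"
proof -
  let ?t = "S (\<sigma>(i := m)) i"
  have t: "?t = finish \<sigma> m (\<pi> m i)"
    unfolding S_def using assms(2) by (simp, intro finish_cong) auto
  let ?rest = "filter (\<lambda>k. \<sigma> k = m \<and> \<pi> m i \<le> \<pi> m k \<and> \<pi> m k < Suc (\<pi> m j)) (prio_list \<pi> m)"
  have "j \<in> set ?rest"
    using assms set_prio_list by simp
  then obtain r rs where rest: "?rest = r # rs"
    by (cases ?rest) auto
  have "C (\<sigma>(i := m)) i = ?t + ptime_eval (p r) ?t / s m"
    unfolding compl_eq_start using assms(1)[of r] by simp
  also have "\<dots> \<le> run (s m) p ?t ?rest"
    unfolding rest using run_Cons_ge[of p, OF ptimes_ok speed_pos start_nonneg] .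
  also have "\<dots> = C \<sigma> j"
    using assms(4) queue_append[of "\<pi> m i" "Suc (\<pi> m j)" \<sigma> m]
    unfolding compl_eq_finish finish_def t assms(3) by (simp add: run_append)
  finally show ?thesis .
qed

definition improving :: "('j \<Rightarrow> 'm) \<Rightarrow> 'j \<Rightarrow> 'm \<Rightarrow> bool" where
  "improving \<sigma> i m \<longleftrightarrow> C (\<sigma>(i := m)) i < C \<sigma> i"

lemma improving_changes_machine: "improving \<sigma> i m \<Longrightarrow> \<sigma> i \<noteq> m"
  unfolding improving_def by auto

definition improvement_step :: "('j \<Rightarrow> 'm) \<Rightarrow> ('j \<Rightarrow> 'm) \<Rightarrow> bool" where
  "improvement_step \<sigma> \<sigma>' \<longleftrightarrow> (\<exists>i m. \<sigma>' = \<sigma>(i := m) \<and> improving \<sigma> i m)"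

lemma improvement_stepE:
  assumes "improvement_step \<sigma> \<sigma>'"
  obtains i m where "\<sigma>' = \<sigma>(i := m)" and "improving \<sigma> i m"
  using assms unfolding improvement_step_def by blast

lemma improvement_step_if_br_step: "br_step s \<pi> p \<sigma> \<sigma>' \<Longrightarrow> improvement_step \<sigma> \<sigma>'"
  unfolding br_step_def improvement_step_def improving_def by (metis le_less_trans)

lemma improvement_step_changes: "improvement_step \<sigma> \<sigma>' \<Longrightarrow> \<sigma>' \<noteq> \<sigma>"
  by (metis improvement_stepE fun_upd_same improving_changes_machine)

lemma NE_if_no_br_step:
  assumes "\<nexists>\<sigma>'. br_step s \<pi> p \<sigma> \<sigma>'"
  shows "is_NE s \<pi> p \<sigma>"
proof (rule ccontr)
  assume "\<not> is_NE s \<pi> p \<sigma>"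
  then obtain i m where better: "C (\<sigma>(i := m)) i < C \<sigma> i"
    unfolding is_NE_def by (auto simp: not_le)
  obtain m0 where best: "C (\<sigma>(i := m0)) i = Min (range (\<lambda>m'. C (\<sigma>(i := m')) i))"
    by (metis (mono_tags) Min_in finite_UNIV finite_imageI imageE empty_not_UNIV image_is_empty)
  then have "C (\<sigma>(i := m0)) i \<le> C (\<sigma>(i := m')) i" for m'
    by simp
  then have "br_step s \<pi> p \<sigma> (\<sigma>(i := m0))"
    unfolding br_step_def using better by blast
  with assms show False
    by blast
qed

lemma key_descent_of_move:
  fixes E :: "('j \<Rightarrow> 'm) \<Rightarrow> 'j \<Rightarrow> 'a::order"
  assumes local: "\<And>\<sigma> \<sigma>' j. \<sigma>' j = \<sigma> j \<Longrightarrow> S \<sigma>' j = S \<sigma> j \<Longrightarrow> C \<sigma>' j = C \<sigma> j \<Longrightarrow> E \<sigma>' j = E \<sigma> j"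
    and mover: "E (\<sigma>(i := m)) i < E \<sigma> i"
    and target: "\<And>j. j \<noteq> i \<Longrightarrow> \<sigma> j = m \<Longrightarrow> \<pi> m i < \<pi> m j \<Longrightarrow> E (\<sigma>(i := m)) i < E \<sigma> j"
    and source: "\<And>j. j \<noteq> i \<Longrightarrow> \<sigma> j = \<sigma> i \<Longrightarrow> \<pi> (\<sigma> i) i < \<pi> (\<sigma> i) j \<Longrightarrow> E (\<sigma>(i := m)) i < E \<sigma> j"
  shows "key_descent (E \<sigma>) (E (\<sigma>(i := m)))"
  unfolding key_descent_def
proof (intro exI conjI allI impI)
  fix j
  assume changed: "E (\<sigma>(i := m)) j \<noteq> E \<sigma> j"
  show "E (\<sigma>(i := m)) i < E \<sigma> j"
  proof (cases "j = i")
    case False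
    then show ?thesis
    proof (cases rule: move_effect_cases[where \<sigma> = \<sigma> and m = m])
      case 1
      with False have "E (\<sigma>(i := m)) j = E \<sigma> j"
        by (intro local) simp_all
      with changed show ?thesis
        by contradiction
    next
      case 2
      with False show ?thesis
        by (rule target)
    next
      case 3
      with False show ?thesis
        by (rule source)
    qed
  qed (use mover in simp)
qed (rule mover)

lemma key_descent_identical_ptimes:
  assumes "\<And>i j. p i = p j" and "improvement_step \<sigma> \<sigma>'"
  shows "key_descent (\<lambda>j. (C \<sigma> j, \<pi> (\<sigma> j) j)) (\<lambda>j. (C \<sigma>' j, \<pi> (\<sigma>' j) j))"
proof -
  obtain i m where \<sigma>': "\<sigma>' = \<sigma>(i := m)" and better: "C \<sigma>' i < C \<sigma> i"
    using improvement_stepE[OF assms(2)] unfolding improving_def by metis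
  show ?thesis
    unfolding \<sigma>'
  proof (rule key_descent_of_move[where E = "\<lambda>\<sigma> j. (C \<sigma> j, \<pi> (\<sigma> j) j)"])
    show "(C (\<sigma>(i := m)) i, \<pi> ((\<sigma>(i := m)) i) i) < (C \<sigma> i, \<pi> (\<sigma> i) i)"
      using better \<sigma>' by simp
  next
    fix j
    assume "j \<noteq> i" "\<sigma> j = m" "\<pi> m i < \<pi> m j"
    moreover have "\<sigma> i \<noteq> m"
      using better \<sigma>' by auto
    ultimately show "(C (\<sigma>(i := m)) i, \<pi> ((\<sigma>(i := m)) i) i) < (C \<sigma> j, \<pi> (\<sigma> j) j)"
      using later_on_target_machine_identical_ptimes[of i \<sigma> m j] assms(1) by auto
  next
    fix j
    assume "j \<noteq> i" "\<sigma> j = \<sigma> i" "\<pi> (\<sigma> i) i < \<pi> (\<sigma> i) j"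
    then have "C \<sigma> i \<le> C \<sigma> j"
      using later_on_same_machine start_le_compl order_trans by blast
    then show "(C (\<sigma>(i := m)) i, \<pi> ((\<sigma>(i := m)) i) i) < (C \<sigma> j, \<pi> (\<sigma> j) j)"
      using better \<sigma>' by simp
  qed simp
qed

lemma key_descent_monotone_identical_machines:
  assumes "\<And>m m'. s m = s m'" and "\<And>k m. mono (\<lambda>t. t + ptime_eval (p k) t / s m)"
    and "improvement_step \<sigma> \<sigma>'"
  shows "key_descent (\<lambda>j. (S \<sigma> j, \<pi> (\<sigma> j) j)) (\<lambda>j. (S \<sigma>' j, \<pi> (\<sigma>' j) j))"
proof -
  obtain i m where \<sigma>': "\<sigma>' = \<sigma>(i := m)" and better: "C \<sigma>' i < C \<sigma> i"
    using improvement_stepE[OF assms(3)] unfolding improving_def by metis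
  have earlier: "S \<sigma>' i < S \<sigma> i"
  proof (rule ccontr)
    assume "\<not> S \<sigma>' i < S \<sigma> i"
    then have "S \<sigma> i \<le> S \<sigma>' i"
      by simp
    then have "C \<sigma> i \<le> S \<sigma>' i + ptime_eval (p i) (S \<sigma>' i) / s (\<sigma> i)"
      unfolding compl_eq_start[of \<sigma>] using monoD[OF assms(2)] by blast
    also have "\<dots> = C \<sigma>' i"
      unfolding compl_eq_start[of \<sigma>'] using assms(1) by metis
    finally show False
      using better by simp
  qed
  show ?thesis
    unfolding \<sigma>'
  proof (rule key_descent_of_move[where E = "\<lambda>\<sigma> j. (S \<sigma> j, \<pi> (\<sigma> j) j)"])
    show "(S (\<sigma>(i := m)) i, \<pi> ((\<sigma>(i := m)) i) i) < (S \<sigma> i, \<pi> (\<sigma> i) i)"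
      using earlier \<sigma>' by simp
  next
    fix j
    assume "j \<noteq> i" "\<sigma> j = m" "\<pi> m i < \<pi> m j"
    moreover have "\<sigma> i \<noteq> m"
      using better \<sigma>' by auto
    ultimately show "(S (\<sigma>(i := m)) i, \<pi> ((\<sigma>(i := m)) i) i) < (S \<sigma> j, \<pi> (\<sigma> j) j)"
      using later_on_target_machine[of \<sigma> i m j] by auto
  next
    fix j
    assume "j \<noteq> i" "\<sigma> j = \<sigma> i" "\<pi> (\<sigma> i) i < \<pi> (\<sigma> i) j"
    then have "C \<sigma> i \<le> S \<sigma> j"
      using later_on_same_machine by blast
    then show "(S (\<sigma>(i := m)) i, \<pi> ((\<sigma>(i := m)) i) i) < (S \<sigma> j, \<pi> (\<sigma> j) j)"
      using better start_le_compl[of \<sigma>' i] \<sigma>' by simp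
  qed simp
qed

lemma key_descent_global_priority:
  assumes "\<And>m m'. \<pi> m = \<pi> m'" and "improvement_step \<sigma> \<sigma>'"
  shows "key_descent (\<lambda>j. (\<pi> (\<sigma> j) j, C \<sigma> j)) (\<lambda>j. (\<pi> (\<sigma>' j) j, C \<sigma>' j))"
proof -
  obtain i m where \<sigma>': "\<sigma>' = \<sigma>(i := m)" and better: "C \<sigma>' i < C \<sigma> i"
    using improvement_stepE[OF assms(2)] unfolding improving_def by metis
  have same_prio: "\<pi> m' k = \<pi> m k" for m' k
    using assms(1) by metis
  show ?thesis
    unfolding \<sigma>'
  proof (rule key_descent_of_move[where E = "\<lambda>\<sigma> j. (\<pi> (\<sigma> j) j, C \<sigma> j)"])
    show "(\<pi> ((\<sigma>(i := m)) i) i, C (\<sigma>(i := m)) i) < (\<pi> (\<sigma> i) i, C \<sigma> i)"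
      using better \<sigma>' same_prio[of "\<sigma> i" i] by simp
  next
    fix j
    assume "\<pi> m i < \<pi> m j"
    then show "(\<pi> ((\<sigma>(i := m)) i) i, C (\<sigma>(i := m)) i) < (\<pi> (\<sigma> j) j, C \<sigma> j)"
      using same_prio[of "\<sigma> j" j] by simp
  next
    fix j
    assume "\<pi> (\<sigma> i) i < \<pi> (\<sigma> i) j"
    then show "(\<pi> ((\<sigma>(i := m)) i) i, C (\<sigma>(i := m)) i) < (\<pi> (\<sigma> j) j, C \<sigma> j)"
      using same_prio[of "\<sigma> i"] same_prio[of "\<sigma> j" j] by simp
  qed simp
qed

lemma compl_le_if_joined:
  assumes "\<And>k. mono (\<lambda>t. t + ptime_eval (p k) t / s (\<sigma> j))"
    and "\<sigma>' j = \<sigma> j" and "\<And>k. \<sigma> k = \<sigma> j \<Longrightarrow> \<sigma>' k = \<sigma> j"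
  shows "C \<sigma> j \<le> C \<sigma>' j"
  unfolding compl_def using assms
  by (simp, intro run_filter_mono[OF ptimes_ok speed_pos]) auto

end

section \<open>Two related machines with positive deterioration\<close>

locale two_machine_game = scheduling_game s \<pi> p
  for s :: "'m::finite \<Rightarrow> real" and \<pi> :: "'m \<Rightarrow> 'j::finite \<Rightarrow> nat" and p :: "'j \<Rightarrow> ptime" +
  fixes slow fast :: 'm
  assumes machines: "UNIV = {slow, fast}"
    and slower: "s slow \<le> s fast"
    and positive: "\<And>k. is_pos (p k)"
begin

lemma slow_or_fast: "m = slow \<or> m = fast"
  using machines by blast

lemma mono_step: "mono (\<lambda>t. t + ptime_eval (p k) t / s m)"
  using positive by (intro mono_ptime_step[OF ptimes_ok speed_pos]) simp

definition settled :: "('j \<Rightarrow> 'm) \<Rightarrow> 'j \<Rightarrow> bool" where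
  "settled \<sigma> k \<longleftrightarrow> \<sigma> k = slow \<and> C \<sigma> k \<le> C (\<sigma>(k := fast)) k"

lemma settled_stays:
  assumes "settled \<sigma> k" and "improvement_step \<sigma> \<sigma>'"
  shows "\<sigma>' k = \<sigma> k"
proof -
  obtain i m where \<sigma>': "\<sigma>' = \<sigma>(i := m)" and better: "improving \<sigma> i m"
    using improvement_stepE[OF assms(2)] .
  have "m = fast" if "i = k"
    using improving_changes_machine[OF better] assms(1) slow_or_fast that
    unfolding settled_def by metis
  then show ?thesis
    using better assms(1) \<sigma>' unfolding settled_def improving_def by fastforce
qed

lemma settled_after_move_to_slow:
  assumes "improvement_step \<sigma> \<sigma>'" and "\<sigma>' k \<noteq> \<sigma> k" and "\<sigma>' k = slow"
  shows "settled \<sigma>' k"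
proof -
  obtain i m where \<sigma>': "\<sigma>' = \<sigma>(i := m)" and better: "improving \<sigma> i m"
    using improvement_stepE[OF assms(1)] .
  have "i = k"
    using assms(2) \<sigma>' by (cases "i = k") auto
  moreover have "\<sigma> k = fast"
    using assms(2,3) slow_or_fast by metis
  ultimately have "\<sigma>'(k := fast) = \<sigma>"
    using \<sigma>' by auto
  with better \<sigma>' \<open>i = k\<close> assms(3) show ?thesis
    unfolding settled_def improving_def by simp
qed

lemma no_gain_after_overtaker_leaves_fast:
  assumes "\<sigma> k = slow" and "\<sigma> h = fast" and "\<pi> slow k < \<pi> slow h" and "\<pi> fast h < \<pi> fast k"
    and better: "improving \<sigma> h slow"
  shows "C \<sigma> k \<le> C ((\<sigma>(h := slow))(k := fast)) k"
proof (rule ccontr)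
  define \<tau> where "\<tau> = (\<sigma>(h := slow))(k := fast)"
  define b where "b = C \<sigma> k"
  define u where "u = S \<sigma> h"
  assume "\<not> C \<sigma> k \<le> C ((\<sigma>(h := slow))(k := fast)) k"
  \<comment> \<open>then \<open>h\<close> starts on \<open>fast\<close> before time \<open>b\<close>, but behind \<open>k\<close> on \<open>slow\<close> it starts after \<open>b\<close>\<close>
  then have "C \<tau> k < b"
    unfolding \<tau>_def b_def by simp
  have hk: "h \<noteq> k"
    using assms(1) improving_changes_machine[OF better] by auto
  have "u = finish \<tau> fast (\<pi> fast h)"
    unfolding u_def S_def \<tau>_def using assms(2,4) hk by (simp, intro finish_cong) auto
  also have "\<dots> \<le> S \<tau> k"
    unfolding S_def \<tau>_def using assms(4) by (simp add: finish_mono)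
  finally have "u < b"
    using start_le_compl[of \<tau> k] \<open>C \<tau> k < b\<close> by linarith
  have "C (\<sigma>(h := slow)) k = b"
    unfolding b_def using hk assms(1,3) by (intro move_unaffected) auto
  then have "b \<le> S (\<sigma>(h := slow)) h"
    using later_on_same_machine[of "\<sigma>(h := slow)" h k] assms(1,3) hk by simp
  then have "b + ptime_eval (p h) b / s slow \<le> C (\<sigma>(h := slow)) h"
    unfolding compl_eq_start[of "\<sigma>(h := slow)" h] using monoD[OF mono_step] by simp
  moreover have "ptime_eval (p h) b / s fast \<le> ptime_eval (p h) b / s slow"
  proof (rule divide_left_mono)
    show "0 \<le> ptime_eval (p h) b"
      using start_nonneg[of \<sigma> h] \<open>u < b\<close> unfolding u_def by (simp add: ptime_eval_nonneg ptimes_ok)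
  qed (use slower speed_pos in simp_all)
  moreover have "u + ptime_eval (p h) u / s fast \<le> b + ptime_eval (p h) b / s fast"
    using monoD[OF mono_step] \<open>u < b\<close> by simp
  moreover have "C \<sigma> h = u + ptime_eval (p h) u / s fast"
    unfolding u_def compl_eq_start using assms(2) by simp
  ultimately have "C \<sigma> h \<le> C (\<sigma>(h := slow)) h"
    by linarith
  with better show False
    unfolding improving_def by simp
qed

lemma settled_preserved:
  assumes "settled \<sigma> k" and better: "improving \<sigma> h m" and "h \<noteq> k" and "\<pi> slow k < \<pi> slow h"
  shows "settled (\<sigma>(h := m)) k"
proof -
  have slow: "\<sigma> k = slow" and settled: "C \<sigma> k \<le> C (\<sigma>(k := fast)) k"
    using assms(1) unfolding settled_def by auto
  have same: "C (\<sigma>(h := m)) k = C \<sigma> k"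
    using assms(3,4) slow by (intro move_unaffected) auto
  have "C \<sigma> k \<le> C ((\<sigma>(k := fast))(h := m)) k"
  proof (cases "m = fast")
    case True
    have "C (\<sigma>(k := fast)) k \<le> C ((\<sigma>(k := fast))(h := m)) k"
      using True assms(3) by (intro compl_le_if_joined mono_step) auto
    with settled show ?thesis
      by simp
  next
    case False
    then have m: "m = slow" and h: "\<sigma> h = fast"
      using slow_or_fast improving_changes_machine[OF better] by metis+
    consider "\<pi> fast k < \<pi> fast h" | "\<pi> fast h < \<pi> fast k"
      using assms(3) by (metis linorder_neqE_nat prio_eq_iff)
    then show ?thesis
    proof cases
      case 1
      then have "C ((\<sigma>(k := fast))(h := m)) k = C (\<sigma>(k := fast)) k"
        using assms(3) by (intro move_unaffected) auto
      with settled show ?thesis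
        by simp
    next
      case 2
      then show ?thesis
        using no_gain_after_overtaker_leaves_fast[OF slow h assms(4) 2] better m assms(3)
        by (simp add: fun_upd_twist)
    qed
  qed
  then show ?thesis
    unfolding settled_def using same slow assms(3) by (simp add: fun_upd_twist)
qed

lemma top_job_eventually_fixed:
  assumes chain: "\<forall>n. improvement_step (f n) (f (Suc n))"
    and fixed: "\<forall>n j. j \<notin> D \<longrightarrow> f (Suc n) j = f n j"
    and top: "\<And>h. h \<in> D \<Longrightarrow> h \<noteq> k \<Longrightarrow> \<pi> slow k < \<pi> slow h"
  shows "\<exists>N. \<forall>n\<ge>N. f n k = f N k"
proof (cases "\<exists>t. f (Suc t) k \<noteq> f t k \<and> f (Suc t) k = slow")
  case True
  then obtain t where "f (Suc t) k \<noteq> f t k" and "f (Suc t) k = slow"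
    by blast
  then have "settled (f (Suc t)) k"
    using chain settled_after_move_to_slow by blast
  have "settled (f n) k" if "Suc t \<le> n" for n
    using that
  proof (induction n rule: dec_induct)
    case (step n)
    obtain h m where step: "f (Suc n) = (f n)(h := m)" and better: "improving (f n) h m"
      using improvement_stepE chain by blast
    have "h \<noteq> k"
      using settled_stays[OF step.IH] chain step improving_changes_machine[OF better] by fastforce
    moreover have "h \<in> D"
      using fixed step improving_changes_machine[OF better] by (metis fun_upd_same)
    ultimately show ?case
      unfolding step using settled_preserved[OF step.IH better] top by blast
  qed fact
  then have "\<forall>n\<ge>Suc t. f n k = f (Suc t) k"
    unfolding settled_def by simp
  then show ?thesis
    by blast
next
  case False
  then have to_fast: "f (Suc n) k = f n k \<or> f (Suc n) k = fast" for n
    using slow_or_fast by blast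
  show ?thesis
  proof (cases "\<exists>t. f t k = fast")
    case True
    then obtain t where t: "f t k = fast"
      by blast
    have "f n k = fast" if "t \<le> n" for n
      using that by (induction n rule: dec_induct) (use t to_fast in auto)
    then show ?thesis
      using t by blast
  next
    case False
    then show ?thesis
      using slow_or_fast by metis
  qed
qed

lemma no_infinite_improvement_sequence_moving_within:
  "\<nexists>f. (\<forall>n. improvement_step (f n) (f (Suc n))) \<and> (\<forall>n j. j \<notin> D \<longrightarrow> f (Suc n) j = f n j)"
  using finite[of D]
proof (induction D rule: finite_remove_induct)
  case empty
  show ?case
  proof
    assume "\<exists>f. (\<forall>n. improvement_step (f n) (f (Suc n))) \<and> (\<forall>n j. j \<notin> {} \<longrightarrow> f (Suc n) j = f n j)"
    then obtain f where "improvement_step (f 0) (f (Suc 0))" and "f (Suc 0) = f 0"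
      by blast
    then show False
      using improvement_step_changes by metis
  qed
next
  case (remove A)
  show ?case
  proof
    assume "\<exists>f. (\<forall>n. improvement_step (f n) (f (Suc n))) \<and> (\<forall>n j. j \<notin> A \<longrightarrow> f (Suc n) j = f n j)"
    then obtain f where chain: "\<forall>n. improvement_step (f n) (f (Suc n))"
      and fixed: "\<forall>n j. j \<notin> A \<longrightarrow> f (Suc n) j = f n j"
      by blast
    obtain k where "k \<in> A" and least: "\<And>h. h \<in> A \<Longrightarrow> \<pi> slow k \<le> \<pi> slow h"
      using ex_has_least_nat[of "\<lambda>k. k \<in> A" _ "\<pi> slow"] \<open>A \<noteq> {}\<close> by blast
    have "\<pi> slow k < \<pi> slow h" if "h \<in> A" "h \<noteq> k" for h
      using least[OF that(1)] that(2) by (metis le_neq_implies_less prio_eq_iff)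
    then obtain N where N: "\<forall>n\<ge>N. f n k = f N k"
      using top_job_eventually_fixed[OF chain fixed] by blast
    let ?g = "\<lambda>n. f (N + n)"
    have "\<forall>n. improvement_step (?g n) (?g (Suc n))"
      using chain by simp
    moreover have "\<forall>n j. j \<notin> A - {k} \<longrightarrow> ?g (Suc n) j = ?g n j"
    proof (intro allI impI)
      fix n j
      assume "j \<notin> A - {k}"
      then show "?g (Suc n) j = ?g n j"
        using fixed N[rule_format, of "N + n"] N[rule_format, of "N + Suc n"] by auto
    qed
    ultimately have "\<exists>g. (\<forall>n. improvement_step (g n) (g (Suc n))) \<and> (\<forall>n j. j \<notin> A - {k} \<longrightarrow> g (Suc n) j = g n j)"
      by (intro exI[of _ ?g] conjI)
    with remove.IH[OF \<open>k \<in> A\<close>] show False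
      by (rule notE)
  qed
qed

end

context scheduling_game
begin

lemma no_infinite_improvement_sequence_two_machines:
  assumes "card (UNIV :: 'm set) = 2" and "\<And>k. is_pos (p k)"
  shows "\<nexists>f. \<forall>n. improvement_step (f n) (f (Suc n))"
proof -
  obtain x y :: 'm where "UNIV = {x, y}"
    using assms(1) card_2_iff by metis
  then obtain slow fast where "UNIV = {slow, fast}" and "s slow \<le> s fast"
    by (metis insert_commute linear)
  then interpret two_machine_game s \<pi> p slow fast
    using assms(2) by unfold_locales
  show ?thesis
    using no_infinite_improvement_sequence_moving_within[of UNIV] by simp
qed

lemma no_infinite_improvement_sequence:
  assumes "game_class s \<pi> p"
  shows "\<nexists>f. \<forall>k. improvement_step (f k) (f (Suc k))"
proof -
  consider (identical_ptimes) "\<forall>i j. p i = p j"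
    | (two_machines) "card (UNIV :: 'm set) = 2" "\<forall>i. is_pos (p i)"
    | (identical_machines) "\<forall>m m'. s m = s m'" "\<forall>k m. is_pos (p k) \<or> det_rate (p k) \<le> s m"
    | (global_priority) "\<forall>m m'. \<pi> m = \<pi> m'"
    using assms unfolding game_class_def by blast
  then show ?thesis
  proof cases
    case identical_ptimes
    show ?thesis
      by (rule no_infinite_chain_key_descent, rule key_descent_identical_ptimes)
        (use identical_ptimes in auto)
  next
    case two_machines
    then show ?thesis
      using no_infinite_improvement_sequence_two_machines by blast
  next
    case identical_machines
    then have mono: "mono (\<lambda>t. t + ptime_eval (p k) t / s m)" for k m
      by (intro mono_ptime_step[OF ptimes_ok speed_pos]) blast
    show ?thesis
      by (rule no_infinite_chain_key_descent, rule key_descent_monotone_identical_machines)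
        (use identical_machines mono in auto)
  next
    case global_priority
    show ?thesis
      by (rule no_infinite_chain_key_descent, rule key_descent_global_priority)
        (use global_priority in auto)
  qed
qed

end

theorem theorem5:
  fixes s :: "'m::finite \<Rightarrow> real" and \<pi> :: "'m \<Rightarrow> 'j::finite \<Rightarrow> nat" and p :: "'j \<Rightarrow> ptime"
  assumes "valid_game s \<pi> p"
    and "game_class s \<pi> p"
  shows "\<not> (\<exists>f :: nat \<Rightarrow> ('j \<Rightarrow> 'm). \<forall>k. br_step s \<pi> p (f k) (f (Suc k)))
         \<and> (\<forall>\<sigma>. (\<nexists>\<sigma>'. br_step s \<pi> p \<sigma> \<sigma>') \<longrightarrow> is_NE s \<pi> p \<sigma>)"
proof
  interpret scheduling_game s \<pi> p
    by (rule scheduling_game.intro) fact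
  show "\<forall>\<sigma>. (\<nexists>\<sigma>'. br_step s \<pi> p \<sigma> \<sigma>') \<longrightarrow> is_NE s \<pi> p \<sigma>"
    using NE_if_no_br_step by blast
  have "\<nexists>f. \<forall>k. improvement_step (f k) (f (Suc k))"
    using assms(2) by (rule no_infinite_improvement_sequence)
  then show "\<nexists>f. \<forall>k. br_step s \<pi> p (f k) (f (Suc k))"
    using improvement_step_if_br_step by blast
qed

end
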